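(* Let $n\ge 3$, $m\ge 1$, and let $f=x_0^{a_0}x_1^{a_1}\cdots x_{n+1}^{a_{n+1}}$ be a monomial. Define $g=x_0^{b_0}x_1^{b_1}\cdots x_{n+1}^{b_{n+1}}$ with $b_0=a_0$, $b_{n+1}=a_{n+1}$ and $b_i=\max\{a_i-1,0\}$ for $i=1,\dots,n$. If $f\in I_{B_n}^{(m)}$, then $g\in I_{B_n}^{(m-(n-2))}$. Moreover $\deg(g)\ge\deg(f)-n$, with equality if $a_i\ne 0$ for all $i=1,\dots,n$.
   Context: Let $k$ be a field. $Q_n$ is the cycle graph on vertices $1,\dots,n$ (edges $\{i,i+1\}$ for $1\le i\le n-1$ and $\{n,1\}$). $B_n$ is the simplicial complex on $\{0,\dots,n+1\}$ with facets $\{0,i,j\}$ and $\{n+1,i,j\}$ for each edge $\{i,j\}$ of $Q_n$, and $I_{B_n}\subset R=k[x_0,\dots,x_{n+1}]$ is its Stanley-Reisner ideal, generated by $\prod_{i\in\tau}x_i$ over non-faces $\tau$ of $B_n$. For a homogeneous ideal $I$, $I^{(m)}=R\cap\bigcap_{P\in\mathrm{Ass}(I)}I^mR_P$ for $m\ge1$, and by convention $I^{(j)}=R$ for $j\le 0$. *)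

theory Defs
  imports Main "HOL-Library.Poly_Mapping"
begin

text \<open>Polynomials over a field 'k in variables x_i (i :: nat), represented as finitely
supported maps from exponent vectors exponent vectors to coefficients.\<close>

type_synonym 'k mpoly = "(nat \<Rightarrow>\<^sub>0 nat) \<Rightarrow>\<^sub>0 'k"

definition polyring :: "nat \<Rightarrow> ('k::field) mpoly set" where
  "polyring N = {p::'k mpoly. \<forall>e\<in>Poly_Mapping.keys p. Poly_Mapping.keys e \<subseteq> {0..N}}"

definition monom :: "(nat \<Rightarrow>\<^sub>0 nat) \<Rightarrow> ('k::field) mpoly" where
  "monom e = Poly_Mapping.single e 1"

definition sqfree_exp :: "nat set \<Rightarrow> nat \<Rightarrow>\<^sub>0 nat" where
  "sqfree_exp T = (\<Sum>i\<in>T. Poly_Mapping.single i 1)"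

definition mdeg :: "(nat \<Rightarrow>\<^sub>0 nat) \<Rightarrow> nat" where
  "mdeg e = (\<Sum>i\<in>Poly_Mapping.keys e. Poly_Mapping.lookup e i)"

definition is_ideal_in :: "'a::comm_ring_1 set \<Rightarrow> 'a set \<Rightarrow> bool" where
  "is_ideal_in Rc J \<longleftrightarrow> J \<subseteq> Rc \<and> 0 \<in> J \<and> (\<forall>x\<in>J. \<forall>y\<in>J. x + y \<in> J) \<and>
      (\<forall>x\<in>J. - x \<in> J) \<and> (\<forall>r\<in>Rc. \<forall>x\<in>J. r * x \<in> J)"

definition ideal_gen :: "'a::comm_ring_1 set \<Rightarrow> 'a set \<Rightarrow> 'a set" where
  "ideal_gen Rc S = \<Inter>{J. is_ideal_in Rc J \<and> S \<subseteq> J}"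

definition ideal_prod :: "'a::comm_ring_1 set \<Rightarrow> 'a set \<Rightarrow> 'a set \<Rightarrow> 'a set" where
  "ideal_prod Rc I J = ideal_gen Rc {a * b | a b. a \<in> I \<and> b \<in> J}"

primrec ideal_pow :: "'a::comm_ring_1 set \<Rightarrow> 'a set \<Rightarrow> nat \<Rightarrow> 'a set" where
  "ideal_pow Rc I 0 = Rc"
| "ideal_pow Rc I (Suc m) = ideal_prod Rc I (ideal_pow Rc I m)"

definition is_prime_in :: "'a::comm_ring_1 set \<Rightarrow> 'a set \<Rightarrow> bool" where
  "is_prime_in Rc P \<longleftrightarrow> is_ideal_in Rc P \<and> P \<noteq> Rc \<and>
      (\<forall>a\<in>Rc. \<forall>b\<in>Rc. a * b \<in> P \<longrightarrow> a \<in> P \<or> b \<in> P)"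

definition Ass :: "'a::comm_ring_1 set \<Rightarrow> 'a set \<Rightarrow> 'a set set" where
  "Ass Rc I = {P. is_prime_in Rc P \<and> (\<exists>r\<in>Rc. P = {x\<in>Rc. x * r \<in> I})}"

text \<open>Symbolic power: R \<inter> \<Inter>_{P \<in> Ass I} I^m R_P for m \<ge> 1 (in a domain,
 f \<in> R lies in I^m R_P iff s f \<in> I^m for some s \<in> R - P); R for m \<le> 0.\<close>
definition symb_pow :: "'a::comm_ring_1 set \<Rightarrow> 'a set \<Rightarrow> int \<Rightarrow> 'a set" where
  "symb_pow Rc I m = (if m \<le> 0 then Rc else
     {f\<in>Rc. \<forall>P\<in>Ass Rc I. \<exists>s\<in>Rc - P. s * f \<in> ideal_pow Rc I (nat m)})"

definition cycle_edge :: "nat \<Rightarrow> nat \<Rightarrow> nat \<Rightarrow> bool" where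
  "cycle_edge n i j \<longleftrightarrow> (1 \<le> i \<and> i < n \<and> j = i + 1) \<or> (1 \<le> j \<and> j < n \<and> i = j + 1)
      \<or> (i = n \<and> j = 1) \<or> (i = 1 \<and> j = n)"

definition B_facets :: "nat \<Rightarrow> nat set set" where
  "B_facets n = {{0, i, j} | i j. cycle_edge n i j} \<union> {{n+1, i, j} | i j. cycle_edge n i j}"

definition B_face :: "nat \<Rightarrow> nat set \<Rightarrow> bool" where
  "B_face n \<tau> \<longleftrightarrow> (\<exists>F\<in>B_facets n. \<tau> \<subseteq> F)"

definition I_B :: "nat \<Rightarrow> ('k::field) mpoly set" where
  "I_B n = ideal_gen (polyring (n+1))
      {monom (sqfree_exp \<tau>) | \<tau>. \<tau> \<subseteq> {0..n+1} \<and> \<not> B_face n \<tau>}"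

end

theory Submission
  imports Defs
begin

text \<open>
  Every associated prime of \<open>I = I\<^sub>B\<^sub>n\<close> is a facet prime \<open>P\<^sub>F = (x\<^sub>i : i \<notin> F)\<close>, and
  \<open>I\<^sup>m \<subseteq> P\<^sub>F\<^sup>m\<close>; since \<open>x\<^sup>a\<close> times some element outside \<open>P\<^sub>F\<close> lies in \<open>I\<^sup>m\<close>, the monomial
  \<open>x\<^sup>a\<close> has degree at least \<open>m\<close> in the variables outside \<open>F\<close>. Lowering the exponents of the
  cycle vertices costs at most \<open>n - 2\<close> of that degree, as only \<open>n - 2\<close> cycle vertices lie
  outside a facet. Conversely, if \<open>x\<^sup>b\<close> has degree \<open>k\<close> outside \<open>F\<close>, then
  \<open>x\<^sub>F\<^sup>k x\<^sup>b \<in> I\<^sup>k\<close>, because \<open>x\<^sub>c x\<^sub>F\<close> is a non-face monomial for every \<open>c \<notin> F\<close>; as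
  \<open>x\<^sub>F \<notin> P\<^sub>F\<close>, this places \<open>x\<^sup>b\<close> in the \<open>k\<close>-th symbolic power.
\<close>

section \<open>Ideals relative to a carrier\<close>

lemma is_ideal_in_ideal_gen:
  assumes "is_ideal_in Rc Rc" "S \<subseteq> Rc"
  shows "is_ideal_in Rc (ideal_gen Rc S)"
proof -
  have Rc: "Rc \<in> {J. is_ideal_in Rc J \<and> S \<subseteq> J}" using assms by blast
  show ?thesis
    unfolding is_ideal_in_def
  proof (intro conjI ballI)
    show "ideal_gen Rc S \<subseteq> Rc" unfolding ideal_gen_def using Rc by blast
    show "0 \<in> ideal_gen Rc S" unfolding ideal_gen_def is_ideal_in_def by blast
    fix x assume x: "x \<in> ideal_gen Rc S"
    show "- x \<in> ideal_gen Rc S" using x unfolding ideal_gen_def is_ideal_in_def by blast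
    fix y assume "y \<in> ideal_gen Rc S"
    then show "x + y \<in> ideal_gen Rc S" using x unfolding ideal_gen_def is_ideal_in_def by blast
  next
    fix r x assume "r \<in> Rc" "x \<in> ideal_gen Rc S"
    then show "r * x \<in> ideal_gen Rc S" unfolding ideal_gen_def is_ideal_in_def by blast
  qed
qed

lemma ideal_gen_superset: "S \<subseteq> ideal_gen Rc S"
  unfolding ideal_gen_def by blast

lemma ideal_gen_least: "is_ideal_in Rc J \<Longrightarrow> S \<subseteq> J \<Longrightarrow> ideal_gen Rc S \<subseteq> J"
  unfolding ideal_gen_def by blast

lemma ideal_in_subset: "is_ideal_in Rc J \<Longrightarrow> J \<subseteq> Rc"
  unfolding is_ideal_in_def by blast

lemma ideal_in_zero: "is_ideal_in Rc J \<Longrightarrow> 0 \<in> J"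
  unfolding is_ideal_in_def by blast

lemma ideal_in_add: "is_ideal_in Rc J \<Longrightarrow> x \<in> J \<Longrightarrow> y \<in> J \<Longrightarrow> x + y \<in> J"
  unfolding is_ideal_in_def by blast

lemma ideal_in_diff: "is_ideal_in Rc J \<Longrightarrow> x \<in> J \<Longrightarrow> y \<in> J \<Longrightarrow> (x::'a::comm_ring_1) - y \<in> J"
  unfolding is_ideal_in_def by (metis diff_conv_add_uminus)

lemma ideal_in_mult_left: "is_ideal_in Rc J \<Longrightarrow> r \<in> Rc \<Longrightarrow> x \<in> J \<Longrightarrow> r * x \<in> J"
  unfolding is_ideal_in_def by blast

lemma ideal_in_mult_right: "is_ideal_in Rc J \<Longrightarrow> r \<in> Rc \<Longrightarrow> x \<in> J \<Longrightarrow> (x::'a::comm_ring_1) * r \<in> J"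
  unfolding is_ideal_in_def by (metis mult.commute)

lemma ideal_in_sum:
  assumes "is_ideal_in Rc J" "\<And>x. x \<in> A \<Longrightarrow> f x \<in> J"
  shows "sum f A \<in> J"
  using assms(2)
proof (induction A rule: infinite_finite_induct)
  case (insert x F)
  then show ?case using ideal_in_add[OF assms(1)] by simp
qed (simp_all add: ideal_in_zero[OF assms(1)])

lemma ideal_pow_mult:
  assumes "x \<in> I" "y \<in> ideal_pow Rc I k"
  shows "x * y \<in> ideal_pow Rc I (Suc k)"
proof -
  have "x * y \<in> {a * b | a b. a \<in> I \<and> b \<in> ideal_pow Rc I k}" using assms by blast
  then show ?thesis
    unfolding ideal_pow.simps ideal_prod_def by (rule subsetD[OF ideal_gen_superset])
qed

lemma prime_in_one_notin:
  assumes "is_prime_in Rc P"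
  shows "1 \<notin> P"
proof
  assume "1 \<in> P"
  then have "Rc \<subseteq> P"
    using assms ideal_in_mult_right[of Rc P _ 1] unfolding is_prime_in_def by auto
  then show False using assms ideal_in_subset unfolding is_prime_in_def by blast
qed

lemma prime_in_prod_notin:
  assumes "is_prime_in Rc P" "is_ideal_in Rc Rc" "1 \<in> Rc" "\<And>x. x \<in> S \<Longrightarrow> y x \<in> Rc - P"
  shows "prod y S \<in> Rc - P"
  using assms(4)
proof (induction S rule: infinite_finite_induct)
  case (insert x F)
  then have "y x \<in> Rc - P" "prod y F \<in> Rc - P" by auto
  moreover have "y x * prod y F \<notin> P"
    using calculation assms(1) unfolding is_prime_in_def by blast
  ultimately show ?case
    using insert(1,2) ideal_in_mult_left[OF assms(2)] by simp
qed (use prime_in_one_notin[OF assms(1)] assms(3) in simp_all)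

lemma prime_in_eq_finite_Inter:
  assumes "is_prime_in Rc P" "is_ideal_in Rc Rc" "1 \<in> Rc" "finite S"
    and Q: "\<And>F. F \<in> S \<Longrightarrow> is_ideal_in Rc (Q F)"
    and P_eq: "P = {x \<in> Rc. \<forall>F\<in>S. x \<in> Q F}"
  shows "\<exists>F\<in>S. P = Q F"
proof (rule ccontr)
  assume no_eq: "\<not> ?thesis"
  have "\<not> Q F \<subseteq> P" if "F \<in> S" for F
  proof
    assume "Q F \<subseteq> P"
    moreover have "P \<subseteq> Q F" using P_eq that by blast
    ultimately show False using no_eq that by blast
  qed
  then have "\<forall>F\<in>S. \<exists>y. y \<in> Q F - P" by blast
  then obtain y where y: "\<And>F. F \<in> S \<Longrightarrow> y F \<in> Q F - P" by metis
  have y_in: "y F \<in> Rc - P" if "F \<in> S" for F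
    using y[OF that] ideal_in_subset[OF Q[OF that]] by blast
  have prod_notin: "prod y S' \<in> Rc - P" if "S' \<subseteq> S" for S'
    by (rule prime_in_prod_notin[OF assms(1-3)]) (use y_in that in blast)
  have "prod y S \<in> Q G" if G: "G \<in> S" for G
  proof -
    have "prod y S = y G * prod y (S - {G})" using G assms(4) by (simp add: prod.remove)
    moreover have "prod y (S - {G}) \<in> Rc" using prod_notin[of "S - {G}"] by blast
    ultimately show ?thesis
      using y[OF G] ideal_in_mult_right[OF Q[OF G]] by simp
  qed
  then have "prod y S \<in> P" using P_eq prod_notin[of S] by blast
  then show False using prod_notin[of S] by blast
qed

section \<open>Polynomial rings\<close>

lemma keys_minus_exponents: "Poly_Mapping.keys ((e::nat \<Rightarrow>\<^sub>0 nat) - f) \<subseteq> Poly_Mapping.keys e"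
  by (auto simp: in_keys_iff lookup_minus)

lemma is_ideal_in_polyring: "is_ideal_in (polyring N) (polyring N :: 'k::field mpoly set)"
  unfolding is_ideal_in_def
proof (intro conjI ballI)
  show "(0::'k mpoly) \<in> polyring N" by (simp add: polyring_def)
  fix x y :: "'k mpoly" assume x: "x \<in> polyring N"
  show "- x \<in> polyring N" using x by (simp add: polyring_def)
  assume "y \<in> polyring N"
  then show "x + y \<in> polyring N"
    using x keys_add[of x y] unfolding polyring_def by blast
next
  fix r x :: "'k mpoly" assume r: "r \<in> polyring N" and x: "x \<in> polyring N"
  show "r * x \<in> polyring N"
    unfolding polyring_def
  proof (intro CollectI ballI)
    fix e assume "e \<in> Poly_Mapping.keys (r * x)"
    then obtain a b where "e = a + b" "a \<in> Poly_Mapping.keys r" "b \<in> Poly_Mapping.keys x"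
      using keys_mult[of r x] by blast
    then show "Poly_Mapping.keys e \<subseteq> {0..N}"
      using r x keys_add[of a b] unfolding polyring_def by blast
  qed
qed simp

lemma polyring_mult: "r \<in> polyring N \<Longrightarrow> x \<in> polyring N \<Longrightarrow> (r::'k::field mpoly) * x \<in> polyring N"
  by (rule ideal_in_mult_left[OF is_ideal_in_polyring])

lemma single_in_polyring:
  "Poly_Mapping.keys e \<subseteq> {0..N} \<Longrightarrow> (Poly_Mapping.single e c :: 'k::field mpoly) \<in> polyring N"
  by (simp add: polyring_def)

lemma monom_in_polyring: "Poly_Mapping.keys e \<subseteq> {0..N} \<Longrightarrow> (monom e :: 'k::field mpoly) \<in> polyring N"
  unfolding monom_def by (rule single_in_polyring)

lemma one_in_polyring: "(1::'k::field mpoly) \<in> polyring N"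
  by (simp add: polyring_def)

lemma monom_add: "(monom (a + b) :: 'k::field mpoly) = monom a * monom b"
  by (simp add: monom_def mult_single)

lemma lookup_sqfree_exp: "finite T \<Longrightarrow> Poly_Mapping.lookup (sqfree_exp T) i = (if i \<in> T then 1 else 0)"
  unfolding sqfree_exp_def lookup_sum by (simp add: lookup_single when_def)

lemma keys_sqfree_exp: "finite T \<Longrightarrow> Poly_Mapping.keys (sqfree_exp T) = T"
  by (auto simp: in_keys_iff lookup_sqfree_exp split: if_splits)

lemma poly_mapping_sum_single:
  "(p::'a \<Rightarrow>\<^sub>0 'b::comm_monoid_add) =
    (\<Sum>e\<in>Poly_Mapping.keys p. Poly_Mapping.single e (Poly_Mapping.lookup p e))"
proof (rule poly_mapping_eqI)
  fix k
  have "(\<Sum>e\<in>Poly_Mapping.keys p. Poly_Mapping.lookup (Poly_Mapping.single e (Poly_Mapping.lookup p e)) k)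
      = (\<Sum>e\<in>Poly_Mapping.keys p. if e = k then Poly_Mapping.lookup p e else 0)"
    by (rule sum.cong) (auto simp: lookup_single when_def)
  also have "\<dots> = Poly_Mapping.lookup p k"
    by (simp add: sum.delta in_keys_iff)
  finally show "Poly_Mapping.lookup p k =
      Poly_Mapping.lookup (\<Sum>e\<in>Poly_Mapping.keys p. Poly_Mapping.single e (Poly_Mapping.lookup p e)) k"
    by (simp add: lookup_sum)
qed

lemma lookup_mult_monom:
  "Poly_Mapping.lookup ((p::'k::field mpoly) * monom a) (u + a) = Poly_Mapping.lookup p u"
proof -
  have "p * monom a = (\<Sum>e\<in>Poly_Mapping.keys p. Poly_Mapping.single (e + a) (Poly_Mapping.lookup p e))"
    by (subst poly_mapping_sum_single[of p]) (simp add: monom_def sum_distrib_right mult_single)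
  then have "Poly_Mapping.lookup (p * monom a) (u + a)
      = (\<Sum>e\<in>Poly_Mapping.keys p. if e = u then Poly_Mapping.lookup p e else 0)"
    by (simp add: lookup_sum lookup_single when_def)
  also have "\<dots> = Poly_Mapping.lookup p u" by (simp add: sum.delta in_keys_iff)
  finally show ?thesis .
qed

section \<open>Degree in a set of variables\<close>

definition deg_in :: "nat set \<Rightarrow> (nat \<Rightarrow>\<^sub>0 nat) \<Rightarrow> nat" where
  "deg_in C e = (\<Sum>i\<in>C. Poly_Mapping.lookup e i)"

lemma deg_in_add: "deg_in C (e + f) = deg_in C e + deg_in C f"
  by (simp add: deg_in_def lookup_add sum.distrib)

lemma deg_in_zero: "deg_in C 0 = 0"
  by (simp add: deg_in_def)

lemma mdeg_eq_deg_in: "finite V \<Longrightarrow> Poly_Mapping.keys e \<subseteq> V \<Longrightarrow> mdeg e = deg_in V e"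
  unfolding mdeg_def deg_in_def by (rule sum.mono_neutral_left) (auto simp: in_keys_iff)

lemma deg_in_decrement:
  assumes "finite C" and "\<And>i. Poly_Mapping.lookup b i =
      (if i \<in> A then Poly_Mapping.lookup a i - 1 else Poly_Mapping.lookup a i)"
  shows "deg_in C a = deg_in C b + card {i \<in> C \<inter> A. Poly_Mapping.lookup a i \<noteq> 0}"
proof -
  have "deg_in C a = (\<Sum>i\<in>C. Poly_Mapping.lookup b i +
      (if i \<in> A \<and> Poly_Mapping.lookup a i \<noteq> 0 then 1 else 0))"
    unfolding deg_in_def by (rule sum.cong) (auto simp: assms(2))
  also have "\<dots> = deg_in C b + card {i \<in> C. i \<in> A \<and> Poly_Mapping.lookup a i \<noteq> 0}"
    unfolding deg_in_def sum.distrib sum.inter_filter[OF assms(1), symmetric] by simp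
  also have "{i \<in> C. i \<in> A \<and> Poly_Mapping.lookup a i \<noteq> 0} = {i \<in> C \<inter> A. Poly_Mapping.lookup a i \<noteq> 0}"
    by blast
  finally show ?thesis .
qed

lemma mdeg_decrement:
  assumes "finite A" and b: "\<And>i. Poly_Mapping.lookup b i =
      (if i \<in> A then Poly_Mapping.lookup a i - 1 else Poly_Mapping.lookup a i)"
  shows "mdeg a = mdeg b + card {i \<in> A. Poly_Mapping.lookup a i \<noteq> 0}"
proof -
  let ?V = "Poly_Mapping.keys a \<union> A"
  have "Poly_Mapping.keys b \<subseteq> Poly_Mapping.keys a"
    using b by (auto simp: in_keys_iff split: if_splits)
  then have "mdeg a = deg_in ?V a" "mdeg b = deg_in ?V b"
    using assms(1) by (auto intro!: mdeg_eq_deg_in)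
  moreover have "{i \<in> ?V \<inter> A. Poly_Mapping.lookup a i \<noteq> 0} = {i \<in> A. Poly_Mapping.lookup a i \<noteq> 0}"
    by blast
  ultimately show ?thesis using deg_in_decrement[of ?V b A a] assms by simp
qed

lemma deg_in_SucE:
  assumes "finite C" "Suc k \<le> deg_in C e"
  obtains c e' where "c \<in> C" "e = e' + Poly_Mapping.single c 1"
    "Poly_Mapping.keys e' \<subseteq> Poly_Mapping.keys e" "k \<le> deg_in C e'"
proof -
  have "\<exists>c\<in>C. Poly_Mapping.lookup e c \<noteq> 0"
  proof (rule ccontr)
    assume "\<not> ?thesis"
    then have "deg_in C e = 0" by (simp add: deg_in_def)
    then show False using assms(2) by simp
  qed
  then obtain c where c: "c \<in> C" "Poly_Mapping.lookup e c \<noteq> 0" by blast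
  define e' where "e' = e - Poly_Mapping.single c 1"
  have e_split: "e = e' + Poly_Mapping.single c 1"
    by (rule poly_mapping_eqI) (use c in \<open>auto simp: e'_def lookup_add lookup_minus lookup_single when_def\<close>)
  have "deg_in C (Poly_Mapping.single c 1) = 1"
    using c(1) assms(1) by (simp add: deg_in_def lookup_single when_def)
  then have "k \<le> deg_in C e'" using assms(2) e_split by (simp add: deg_in_add)
  moreover have "Poly_Mapping.keys e' \<subseteq> Poly_Mapping.keys e"
    unfolding e'_def by (rule keys_minus_exponents)
  ultimately show thesis using that c(1) e_split by blast
qed

definition deg_in_at_least :: "nat \<Rightarrow> nat set \<Rightarrow> nat \<Rightarrow> 'k::field mpoly set" where
  "deg_in_at_least N C k =
    {p \<in> polyring N. \<forall>e\<in>Poly_Mapping.keys p. k \<le> deg_in C e}"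

lemma deg_in_at_least_0: "deg_in_at_least N C 0 = polyring N"
  by (auto simp: deg_in_at_least_def)

lemma deg_in_at_least_mult:
  assumes "x \<in> deg_in_at_least N C i" "y \<in> deg_in_at_least N C j"
  shows "(x::'k::field mpoly) * y \<in> deg_in_at_least N C (i + j)"
proof -
  have "x * y \<in> polyring N" using assms polyring_mult by (auto simp: deg_in_at_least_def)
  moreover have "i + j \<le> deg_in C e" if e: "e \<in> Poly_Mapping.keys (x * y)" for e
  proof -
    obtain a b where "e = a + b" "a \<in> Poly_Mapping.keys x" "b \<in> Poly_Mapping.keys y"
      using e keys_mult[of x y] by blast
    then show ?thesis using assms by (auto simp: deg_in_add deg_in_at_least_def intro: add_mono)
  qed
  ultimately show ?thesis by (simp add: deg_in_at_least_def)
qed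

lemma is_ideal_in_deg_in_at_least:
  "is_ideal_in (polyring N) (deg_in_at_least N C k :: 'k::field mpoly set)"
  unfolding is_ideal_in_def
proof (intro conjI ballI)
  show "deg_in_at_least N C k \<subseteq> polyring N" by (auto simp: deg_in_at_least_def)
  show "(0::'k mpoly) \<in> deg_in_at_least N C k"
    by (simp add: deg_in_at_least_def ideal_in_zero[OF is_ideal_in_polyring])
  fix x y :: "'k mpoly" assume x: "x \<in> deg_in_at_least N C k"
  show "- x \<in> deg_in_at_least N C k"
    using x by (simp add: deg_in_at_least_def polyring_def)
  assume "y \<in> deg_in_at_least N C k"
  then show "x + y \<in> deg_in_at_least N C k"
    using x keys_add[of x y] ideal_in_add[OF is_ideal_in_polyring]
    unfolding deg_in_at_least_def by blast
next
  fix r x :: "'k mpoly" assume "r \<in> polyring N" "x \<in> deg_in_at_least N C k"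
  then show "r * x \<in> deg_in_at_least N C k"
    using deg_in_at_least_mult[of r N C 0 x k] by (simp add: deg_in_at_least_0)
qed

lemma ideal_pow_subset_deg_in_at_least:
  assumes "is_ideal_in (polyring N) I" "I \<subseteq> (deg_in_at_least N C 1 :: 'k::field mpoly set)"
  shows "ideal_pow (polyring N) I k \<subseteq> deg_in_at_least N C k"
proof (induction k)
  case 0
  then show ?case by (simp add: deg_in_at_least_0)
next
  case (Suc k)
  have "{a * b | a b. a \<in> I \<and> b \<in> ideal_pow (polyring N) I k} \<subseteq> deg_in_at_least N C (Suc k)"
    using assms(2) Suc deg_in_at_least_mult[of _ N C 1 _ k] by fastforce
  then show ?case
    unfolding ideal_pow.simps ideal_prod_def
    by (rule ideal_gen_least[OF is_ideal_in_deg_in_at_least])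
qed

definition deg_in_zero_part :: "nat set \<Rightarrow> ((nat \<Rightarrow>\<^sub>0 nat) \<Rightarrow>\<^sub>0 'a::zero) \<Rightarrow> (nat \<Rightarrow>\<^sub>0 nat) \<Rightarrow>\<^sub>0 'a" where
  "deg_in_zero_part C p = Poly_Mapping.mapp (\<lambda>e c. c when deg_in C e = 0) p"

lemma lookup_deg_in_zero_part:
  "Poly_Mapping.lookup (deg_in_zero_part C p) e = (Poly_Mapping.lookup p e when deg_in C e = 0)"
  by (simp add: deg_in_zero_part_def lookup_mapp when_def in_keys_iff)

lemma keys_deg_in_zero_part:
  "e \<in> Poly_Mapping.keys (deg_in_zero_part C p) \<Longrightarrow> e \<in> Poly_Mapping.keys p \<and> deg_in C e = 0"
  by (simp add: in_keys_iff lookup_deg_in_zero_part when_def split: if_splits)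

lemma deg_in_zero_part_in_polyring:
  "p \<in> polyring N \<Longrightarrow> deg_in_zero_part C (p :: 'k::field mpoly) \<in> polyring N"
  using keys_deg_in_zero_part by (auto simp: polyring_def)

lemma diff_deg_in_zero_part_in_deg_in_at_least:
  assumes "(p :: 'k::field mpoly) \<in> polyring N"
  shows "p - deg_in_zero_part C p \<in> deg_in_at_least N C 1"
proof -
  have "p - deg_in_zero_part C p \<in> polyring N"
    using assms deg_in_zero_part_in_polyring ideal_in_diff[OF is_ideal_in_polyring] by blast
  moreover have "1 \<le> deg_in C e" if "e \<in> Poly_Mapping.keys (p - deg_in_zero_part C p)" for e
    using that by (cases "deg_in C e = 0") (auto simp: in_keys_iff lookup_minus lookup_deg_in_zero_part)
  ultimately show ?thesis by (simp add: deg_in_at_least_def)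
qed

lemma is_prime_in_deg_in_at_least_1:
  "is_prime_in (polyring N) (deg_in_at_least N C 1 :: 'k::field mpoly set)"
  unfolding is_prime_in_def
proof (intro conjI ballI impI)
  let ?P = "deg_in_at_least N C 1 :: 'k mpoly set" and ?low = "deg_in_zero_part C"
  show "is_ideal_in (polyring N) ?P" by (rule is_ideal_in_deg_in_at_least)
  have "1 \<notin> ?P" by (simp add: deg_in_at_least_def deg_in_zero)
  then show "?P \<noteq> polyring N" using one_in_polyring by blast
  fix x y :: "'k mpoly"
  assume x: "x \<in> polyring N" and y: "y \<in> polyring N" and xy: "x * y \<in> ?P"
  have "x * y = ?low x * ?low y + ((x - ?low x) * y + ?low x * (y - ?low y))"
    by (simp add: algebra_simps)
  moreover have "(x - ?low x) * y + ?low x * (y - ?low y) \<in> ?P"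
    using x y deg_in_zero_part_in_polyring diff_deg_in_zero_part_in_deg_in_at_least
      is_ideal_in_deg_in_at_least
    by (meson ideal_in_add ideal_in_mult_left ideal_in_mult_right)
  ultimately have low_xy: "?low x * ?low y \<in> ?P"
    using xy ideal_in_diff[OF is_ideal_in_deg_in_at_least] by (metis add_diff_cancel_right')
  have "Poly_Mapping.keys (?low x * ?low y) = {}"
  proof (intro equals0I)
    fix e assume e: "e \<in> Poly_Mapping.keys (?low x * ?low y)"
    then obtain a b where "e = a + b" "a \<in> Poly_Mapping.keys (?low x)" "b \<in> Poly_Mapping.keys (?low y)"
      using keys_mult[of "?low x" "?low y"] by blast
    then have "deg_in C e = 0" using keys_deg_in_zero_part by (metis add_0 deg_in_add)
    then show False using e low_xy by (force simp: deg_in_at_least_def)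
  qed
  then have "?low x = 0 \<or> ?low y = 0" by simp
  then show "x \<in> ?P \<or> y \<in> ?P"
    using diff_deg_in_zero_part_in_deg_in_at_least[OF x, of C]
      diff_deg_in_zero_part_in_deg_in_at_least[OF y, of C] by auto
qed

lemma deg_in_ge_if_monom_in_symb_pow:
  assumes "is_ideal_in (polyring N) I" "I \<subseteq> deg_in_at_least N C 1"
    and "deg_in_at_least N C 1 \<in> Ass (polyring N) I" "1 \<le> m"
    and "(monom a :: 'k::field mpoly) \<in> symb_pow (polyring N) I (int m)"
  shows "m \<le> deg_in C a"
proof -
  obtain s where s: "s \<in> polyring N - deg_in_at_least N C 1"
      "s * monom a \<in> ideal_pow (polyring N) I m"
    using assms(3-5) by (auto simp: symb_pow_def)
  then obtain u where u: "u \<in> Poly_Mapping.keys s" "deg_in C u = 0"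
    by (auto simp: deg_in_at_least_def)
  have "u + a \<in> Poly_Mapping.keys (s * monom a)"
    using u(1) by (simp add: in_keys_iff lookup_mult_monom)
  moreover have "s * monom a \<in> deg_in_at_least N C m"
    using s(2) ideal_pow_subset_deg_in_at_least[OF assms(1,2)] by blast
  ultimately have "m \<le> deg_in C (u + a)" by (auto simp: deg_in_at_least_def)
  then show ?thesis using u(2) by (simp add: deg_in_add)
qed

section \<open>The complex \<open>B\<^sub>n\<close>\<close>

lemma B_facetE:
  assumes "2 \<le> n" "F \<in> B_facets n"
  obtains c i j where "c \<in> {0, n + 1}" "i \<in> {1..n}" "j \<in> {1..n}" "i \<noteq> j" "F = {c, i, j}"
proof -
  obtain i j where ij: "cycle_edge n i j" "F = {0, i, j} \<or> F = {n + 1, i, j}"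
    using assms(2) unfolding B_facets_def by blast
  moreover have "i \<in> {1..n}" "j \<in> {1..n}" "i \<noteq> j"
    using ij(1) assms(1) unfolding cycle_edge_def by auto
  ultimately show thesis using that by blast
qed

lemma B_facet_subset: "F \<in> B_facets n \<Longrightarrow> F \<subseteq> {0..n+1}"
  unfolding B_facets_def cycle_edge_def by auto

lemma finite_B_facets: "finite (B_facets n)"
  using B_facet_subset finite_subset[of "B_facets n" "Pow {0..n+1}"] by blast

lemma card_B_facet: "2 \<le> n \<Longrightarrow> F \<in> B_facets n \<Longrightarrow> card F = 3"
  by (erule B_facetE) auto

lemma card_cycle_diff_B_facet: "2 \<le> n \<Longrightarrow> F \<in> B_facets n \<Longrightarrow> card ({1..n} - F) = n - 2"
proof (erule B_facetE)
  fix c i j assume "c \<in> {0, n + 1}" "i \<in> {1..n}" "j \<in> {1..n}" "i \<noteq> j" "F = {c, i, j}"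
  then have "{1..n} - F = {1..n} - {i, j}" by auto
  then show "card ({1..n} - F) = n - 2"
    using \<open>i \<in> {1..n}\<close> \<open>j \<in> {1..n}\<close> \<open>i \<noteq> j\<close> by (simp add: card_Diff_subset)
qed

lemma not_B_face_insert:
  assumes "2 \<le> n" "F \<in> B_facets n" "c \<notin> F"
  shows "\<not> B_face n (insert c F)"
proof
  assume "B_face n (insert c F)"
  then obtain G where G: "G \<in> B_facets n" "insert c F \<subseteq> G" by (auto simp: B_face_def)
  have "card (insert c F) = 4"
    using assms card_B_facet[OF assms(1,2)] B_facet_subset[OF assms(2)] finite_subset by fastforce
  moreover have "card (insert c F) \<le> card G"
    using G B_facet_subset[OF G(1)] by (meson card_mono finite_atLeastAtMost finite_subset)
  ultimately show False using card_B_facet[OF assms(1) G(1)] by simp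
qed

lemma nonface_monoms_subset_polyring:
  "{monom (sqfree_exp \<tau>) | \<tau>. \<tau> \<subseteq> {0..n+1} \<and> \<not> B_face n \<tau>} \<subseteq> (polyring (n+1) :: 'k::field mpoly set)"
proof safe
  fix \<tau> assume \<tau>: "\<tau> \<subseteq> {0..n+1}"
  then have "finite \<tau>" using finite_subset by blast
  then show "(monom (sqfree_exp \<tau>) :: 'k mpoly) \<in> polyring (n+1)"
    using \<tau> by (simp add: keys_sqfree_exp monom_in_polyring)
qed

lemma is_ideal_in_I_B: "is_ideal_in (polyring (n+1)) (I_B n :: 'k::field mpoly set)"
  unfolding I_B_def by (rule is_ideal_in_ideal_gen[OF is_ideal_in_polyring nonface_monoms_subset_polyring])

lemma nonface_monom_in_I_B:
  "\<tau> \<subseteq> {0..n+1} \<Longrightarrow> \<not> B_face n \<tau> \<Longrightarrow> (monom (sqfree_exp \<tau>) :: 'k::field mpoly) \<in> I_B n"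
  unfolding I_B_def by (rule subsetD[OF ideal_gen_superset]) blast

text \<open>The prime \<open>P\<^sub>F\<close> generated by the variables outside the facet \<open>F\<close>.\<close>

definition facet_prime :: "nat \<Rightarrow> nat set \<Rightarrow> 'k::field mpoly set" where
  "facet_prime n F = deg_in_at_least (n+1) ({0..n+1} - F) 1"

lemma I_B_subset_facet_prime:
  assumes "F \<in> B_facets n"
  shows "(I_B n :: 'k::field mpoly set) \<subseteq> facet_prime n F"
  unfolding I_B_def facet_prime_def
proof (rule ideal_gen_least[OF is_ideal_in_deg_in_at_least], safe)
  fix \<tau> assume \<tau>: "\<tau> \<subseteq> {0..n+1}" "\<not> B_face n \<tau>"
  then obtain c where c: "c \<in> \<tau>" "c \<notin> F" using assms by (auto simp: B_face_def)
  have fin: "finite \<tau>" using \<tau>(1) finite_subset by blast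
  have "Poly_Mapping.lookup (sqfree_exp \<tau>) c \<le> deg_in ({0..n+1} - F) (sqfree_exp \<tau>)"
    unfolding deg_in_def by (rule member_le_sum) (use c \<tau>(1) in auto)
  then have "1 \<le> deg_in ({0..n+1} - F) (sqfree_exp \<tau>)"
    using c fin by (simp add: lookup_sqfree_exp)
  then show "(monom (sqfree_exp \<tau>) :: 'k mpoly) \<in> deg_in_at_least (n+1) ({0..n+1} - F) 1"
    using \<tau> fin by (simp add: deg_in_at_least_def monom_def keys_sqfree_exp single_in_polyring)
qed

lemma monom_in_I_B:
  assumes "Poly_Mapping.keys e \<subseteq> {0..n+1}" "\<not> B_face n (Poly_Mapping.keys e)"
  shows "(monom e :: 'k::field mpoly) \<in> I_B n"
proof -
  let ?\<tau> = "Poly_Mapping.keys e"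
  have "e = (e - sqfree_exp ?\<tau>) + sqfree_exp ?\<tau>"
    by (rule poly_mapping_eqI) (auto simp: lookup_add lookup_minus lookup_sqfree_exp in_keys_iff)
  then have "(monom e :: 'k mpoly) = monom (e - sqfree_exp ?\<tau>) * monom (sqfree_exp ?\<tau>)"
    by (metis monom_add)
  moreover have "Poly_Mapping.keys (e - sqfree_exp ?\<tau>) \<subseteq> {0..n+1}"
    using assms(1) keys_minus_exponents[of e] by blast
  ultimately show ?thesis
    using ideal_in_mult_left[OF is_ideal_in_I_B monom_in_polyring nonface_monom_in_I_B[OF assms]]
    by metis
qed

lemma mem_I_B_if_mem_facet_primes:
  assumes p: "p \<in> polyring (n+1)" and all: "\<And>F. F \<in> B_facets n \<Longrightarrow> p \<in> facet_prime n F"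
  shows "(p :: 'k::field mpoly) \<in> I_B n"
proof -
  have "Poly_Mapping.single 0 (Poly_Mapping.lookup p e) * monom e \<in> I_B n"
    if e: "e \<in> Poly_Mapping.keys p" for e
  proof -
    have eV: "Poly_Mapping.keys e \<subseteq> {0..n+1}" using p e by (auto simp: polyring_def)
    have "\<not> B_face n (Poly_Mapping.keys e)"
    proof
      assume "B_face n (Poly_Mapping.keys e)"
      then obtain F where F: "F \<in> B_facets n" "Poly_Mapping.keys e \<subseteq> F" by (auto simp: B_face_def)
      have "deg_in ({0..n+1} - F) e = 0"
        unfolding deg_in_def using F(2) by (intro sum.neutral) (auto simp: in_keys_iff)
      then show False using all[OF F(1)] e by (force simp: facet_prime_def deg_in_at_least_def)
    qed
    then show ?thesis
      using ideal_in_mult_left[OF is_ideal_in_I_B single_in_polyring[of 0] monom_in_I_B[OF eV]] by simp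
  qed
  then have "(\<Sum>e\<in>Poly_Mapping.keys p. Poly_Mapping.single 0 (Poly_Mapping.lookup p e) * monom e) \<in> I_B n"
    by (rule ideal_in_sum[OF is_ideal_in_I_B])
  then show ?thesis
    by (subst poly_mapping_sum_single) (simp add: monom_def mult_single)
qed

lemma colon_I_B_eq:
  assumes "r \<in> polyring (n+1)"
  shows "{x \<in> polyring (n+1). x * r \<in> (I_B n :: 'k::field mpoly set)} =
    {x \<in> polyring (n+1). \<forall>F\<in>{F \<in> B_facets n. r \<notin> facet_prime n F}. x \<in> facet_prime n F}"
proof -
  have "x * r \<in> I_B n \<longleftrightarrow> (\<forall>F\<in>B_facets n. r \<notin> facet_prime n F \<longrightarrow> x \<in> facet_prime n F)"
    if x: "x \<in> polyring (n+1)" for x :: "'k mpoly"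
  proof -
    have "x * r \<in> I_B n \<longleftrightarrow> (\<forall>F\<in>B_facets n. x * r \<in> facet_prime n F)"
      using mem_I_B_if_mem_facet_primes[of "x * r" n] I_B_subset_facet_prime polyring_mult[OF x assms]
      by blast
    also have "\<dots> \<longleftrightarrow> (\<forall>F\<in>B_facets n. x \<in> facet_prime n F \<or> r \<in> facet_prime n F)"
      using is_prime_in_deg_in_at_least_1 x assms is_ideal_in_deg_in_at_least
      unfolding facet_prime_def is_prime_in_def
      by (meson ideal_in_mult_left ideal_in_mult_right)
    finally show ?thesis by blast
  qed
  then show ?thesis by blast
qed

lemma Ass_I_B:
  assumes "P \<in> Ass (polyring (n+1)) (I_B n :: 'k::field mpoly set)"
  shows "\<exists>F\<in>B_facets n. P = facet_prime n F"
proof -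
  obtain r where r: "r \<in> polyring (n+1)" "P = {x \<in> polyring (n+1). x * r \<in> (I_B n :: 'k mpoly set)}"
    and prime: "is_prime_in (polyring (n+1)) P"
    using assms by (auto simp: Ass_def)
  have "\<exists>F\<in>{F \<in> B_facets n. r \<notin> facet_prime n F}. P = facet_prime n F"
  proof (rule prime_in_eq_finite_Inter[OF prime is_ideal_in_polyring one_in_polyring])
    show "finite {F \<in> B_facets n. r \<notin> facet_prime n F}" using finite_B_facets by simp
    show "is_ideal_in (polyring (n+1)) (facet_prime n F :: 'k mpoly set)" for F
      unfolding facet_prime_def by (rule is_ideal_in_deg_in_at_least)
    show "P = {x \<in> polyring (n+1). \<forall>F\<in>{F \<in> B_facets n. r \<notin> facet_prime n F}. x \<in> facet_prime n F}"
      using colon_I_B_eq[OF r(1)] r(2) by simp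
  qed
  then show ?thesis by blast
qed

lemma deg_in_decrement_outside_B_facet:
  assumes n: "2 \<le> n" and F: "F \<in> B_facets n"
    and b: "\<And>i. Poly_Mapping.lookup b i =
      (if i \<in> {1..n} then Poly_Mapping.lookup a i - 1 else Poly_Mapping.lookup a i)"
  shows "deg_in ({0..n+1} - F) a \<le> deg_in ({0..n+1} - F) b + (n - 2)"
proof -
  let ?C = "{0..n+1} - F"
  have "deg_in ?C a = deg_in ?C b + card {i \<in> ?C \<inter> {1..n}. Poly_Mapping.lookup a i \<noteq> 0}"
    by (rule deg_in_decrement) (simp_all add: b)
  moreover have "card {i \<in> ?C \<inter> {1..n}. Poly_Mapping.lookup a i \<noteq> 0} \<le> card ({1..n} - F)"
    by (rule card_mono) auto
  ultimately show ?thesis using card_cycle_diff_B_facet[OF n F] by linarith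
qed

lemma monom_var_mult_facet_in_I_B:
  assumes "2 \<le> n" "F \<in> B_facets n" "c \<in> {0..n+1} - F"
  shows "(monom (Poly_Mapping.single c 1) * monom (sqfree_exp F) :: 'k::field mpoly) \<in> I_B n"
proof -
  have "finite F" using B_facet_subset[OF assms(2)] finite_subset by blast
  then have "Poly_Mapping.single c 1 + sqfree_exp F = sqfree_exp (insert c F)"
    by (intro poly_mapping_eqI) (use assms(3) in \<open>auto simp: lookup_add lookup_sqfree_exp lookup_single when_def\<close>)
  moreover have "insert c F \<subseteq> {0..n+1}" using assms(3) B_facet_subset[OF assms(2)] by blast
  ultimately show ?thesis
    using nonface_monom_in_I_B not_B_face_insert[OF assms(1,2)] assms(3) by (metis Diff_iff monom_add)
qed

lemma monom_mult_facet_pow_in_ideal_pow: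
  assumes n: "2 \<le> n" and F: "F \<in> B_facets n"
  shows "Poly_Mapping.keys e \<subseteq> {0..n+1} \<Longrightarrow> k \<le> deg_in ({0..n+1} - F) e \<Longrightarrow>
    (monom e * monom (sqfree_exp F) ^ k :: 'k::field mpoly) \<in> ideal_pow (polyring (n+1)) (I_B n) k"
proof (induction k arbitrary: e)
  case 0
  then show ?case by (simp add: monom_in_polyring)
next
  case (Suc k e)
  obtain c e' where c: "c \<in> {0..n+1} - F" and e_split: "e = e' + Poly_Mapping.single c 1"
    and "Poly_Mapping.keys e' \<subseteq> Poly_Mapping.keys e" "k \<le> deg_in ({0..n+1} - F) e'"
    using deg_in_SucE[OF _ Suc.prems(2)] by blast
  with Suc.prems(1) have IH: "(monom e' * monom (sqfree_exp F) ^ k :: 'k mpoly) \<in> ideal_pow (polyring (n+1)) (I_B n) k"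
    by (intro Suc.IH) auto
  have "(monom e * monom (sqfree_exp F) ^ Suc k :: 'k mpoly) =
      (monom (Poly_Mapping.single c 1) * monom (sqfree_exp F)) * (monom e' * monom (sqfree_exp F) ^ k)"
    by (simp add: e_split monom_add mult_ac)
  also have "\<dots> \<in> ideal_pow (polyring (n+1)) (I_B n) (Suc k)"
    by (rule ideal_pow_mult[OF monom_var_mult_facet_in_I_B[OF n F c] IH])
  finally show ?case .
qed

lemma monom_in_symb_pow_I_B:
  assumes n: "2 \<le> n" and b: "Poly_Mapping.keys b \<subseteq> {0..n+1}"
    and deg: "\<And>F. F \<in> B_facets n \<Longrightarrow>
      facet_prime n F \<in> Ass (polyring (n+1)) (I_B n :: 'k::field mpoly set) \<Longrightarrow>
      k \<le> int (deg_in ({0..n+1} - F) b)"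
  shows "(monom b :: 'k mpoly) \<in> symb_pow (polyring (n+1)) (I_B n) k"
proof (cases "k \<le> 0")
  case True
  then show ?thesis using monom_in_polyring[OF b] by (simp add: symb_pow_def)
next
  case False
  have "\<exists>s\<in>polyring (n+1) - P. s * monom b \<in> ideal_pow (polyring (n+1)) (I_B n) (nat k)"
    if P: "P \<in> Ass (polyring (n+1)) (I_B n :: 'k mpoly set)" for P
  proof -
    obtain F where F: "F \<in> B_facets n" "P = facet_prime n F" using Ass_I_B[OF P] by blast
    have finF: "finite F" using B_facet_subset[OF F(1)] finite_subset by blast
    have "deg_in ({0..n+1} - F) (sqfree_exp F) = 0"
      using finF by (simp add: deg_in_def lookup_sqfree_exp)
    then have xF: "(monom (sqfree_exp F) :: 'k mpoly) \<in> polyring (n+1) - P"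
      using F finF B_facet_subset[OF F(1)]
      by (simp add: facet_prime_def deg_in_at_least_def monom_def keys_sqfree_exp single_in_polyring)
    have "is_prime_in (polyring (n+1)) P" using P by (simp add: Ass_def)
    then have "(\<Prod>_\<in>{..<nat k}. monom (sqfree_exp F)) \<in> polyring (n+1) - P"
      using xF by (rule prime_in_prod_notin[OF _ is_ideal_in_polyring one_in_polyring])
    then have "monom (sqfree_exp F) ^ nat k \<in> polyring (n+1) - P" by simp
    moreover have "nat k \<le> deg_in ({0..n+1} - F) b"
      using deg[OF F(1)] P F(2) by (simp add: nat_le_iff)
    then have "monom b * monom (sqfree_exp F) ^ nat k \<in> ideal_pow (polyring (n+1)) (I_B n) (nat k)"
      by (rule monom_mult_facet_pow_in_ideal_pow[OF n F(1) b])
    ultimately show ?thesis by (metis mult.commute)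
  qed
  then show ?thesis using False monom_in_polyring[OF b] by (simp add: symb_pow_def)
qed

theorem lemma3p9:
  fixes n m :: nat and a b :: "nat \<Rightarrow>\<^sub>0 nat"
  assumes "n \<ge> 3" and "m \<ge> 1"
    and "Poly_Mapping.keys a \<subseteq> {0..n+1}"
    and "\<And>i. Poly_Mapping.lookup b i = (if 1 \<le> i \<and> i \<le> n then max (Poly_Mapping.lookup a i - 1) 0 else Poly_Mapping.lookup a i)"
    and "(monom a :: 'k::field mpoly) \<in> symb_pow (polyring (n+1)) (I_B n) (int m)"
  shows "(monom b :: 'k mpoly) \<in> symb_pow (polyring (n+1)) (I_B n) (int m - (int n - 2))
    \<and> int (mdeg b) \<ge> int (mdeg a) - int n
    \<and> ((\<forall>i\<in>{1..n}. Poly_Mapping.lookup a i \<noteq> 0) \<longrightarrow> int (mdeg b) = int (mdeg a) - int n)"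
proof -
  have n: "2 \<le> n" using assms(1) by simp
  have b_eq: "Poly_Mapping.lookup b i =
      (if i \<in> {1..n} then Poly_Mapping.lookup a i - 1 else Poly_Mapping.lookup a i)" for i
    using assms(4)[of i] by simp
  have bV: "Poly_Mapping.keys b \<subseteq> {0..n+1}"
    using assms(3) by (auto simp: in_keys_iff b_eq split: if_splits)
  have "(monom b :: 'k mpoly) \<in> symb_pow (polyring (n+1)) (I_B n) (int m - (int n - 2))"
  proof (rule monom_in_symb_pow_I_B[OF n bV])
    fix F assume F: "F \<in> B_facets n"
      and P: "facet_prime n F \<in> Ass (polyring (n+1)) (I_B n :: 'k mpoly set)"
    have "m \<le> deg_in ({0..n+1} - F) a"
      using deg_in_ge_if_monom_in_symb_pow[OF is_ideal_in_I_B _ _ assms(2,5)]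
        I_B_subset_facet_prime[OF F] P unfolding facet_prime_def by blast
    then show "int m - (int n - 2) \<le> int (deg_in ({0..n+1} - F) b)"
      using deg_in_decrement_outside_B_facet[OF n F b_eq] n by linarith
  qed
  moreover have "mdeg a = mdeg b + card {i \<in> {1..n}. Poly_Mapping.lookup a i \<noteq> 0}"
    by (rule mdeg_decrement) (simp_all add: b_eq)
  moreover have "card {i \<in> {1..n}. Poly_Mapping.lookup a i \<noteq> 0} \<le> card {1..n}"
    by (rule card_mono) auto
  moreover have "{i \<in> {1..n}. Poly_Mapping.lookup a i \<noteq> 0} = {1..n}"
    if "\<forall>i\<in>{1..n}. Poly_Mapping.lookup a i \<noteq> 0"
    using that by blast
  ultimately show ?thesis by auto
qed

end
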